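(* Let $q\ge 2$. There is no $u\in C^{6}(\mathbb{R}^{4})$ with $u>0$ solving $\Delta^{3}u=u^{-q}$ in $\mathbb{R}^{4}$ and satisfying $u(x)=o(|x|^{4})$ as $|x|\to+\infty$. *)

theory Defs
  imports "HOL-Analysis.Analysis" "HOL-Library.Landau_Symbols"
begin

definition partial :: "'n::finite \<Rightarrow> (real^'n \<Rightarrow> real) \<Rightarrow> real^'n \<Rightarrow> real" where
  "partial i f x = deriv (\<lambda>t. f (x + t *\<^sub>R axis i 1)) 0"

fun Ck :: "nat \<Rightarrow> (real^'n::finite \<Rightarrow> real) \<Rightarrow> bool" where
  "Ck 0 f = continuous_on UNIV f"
| "Ck (Suc k) f = (continuous_on UNIV f \<and> (\<forall>x. f differentiable (at x))
                    \<and> (\<forall>i. Ck k (partial i f)))"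

definition laplacian :: "(real^'n::finite \<Rightarrow> real) \<Rightarrow> real^'n \<Rightarrow> real" where
  "laplacian f x = (\<Sum>i\<in>UNIV. partial i (partial i f) x)"

end

(* A positive solution of Delta^3 u = u^(-q) on R^4 has Delta^3 u > 0, and this alone is
   incompatible with u = o(|x|^4).  Average against the kernels
   K_m(t, x) = (2t - |x|^2)_+^m / t^(m+2), which satisfy d/dt K_m = Delta K_(m+1) / (4(m+1)).
   By Green's identity the average A(t) of u against K_2 has derivatives A' = B, B' = C, C' = D,
   which are multiples of the averages of Delta u, Delta^2 u, Delta^3 u against K_3, K_4, K_5.
   Positivity of Delta^3 u gives D(t) >= c / t^2, positivity of u gives A >= 0, and the growth
   condition gives A(t) = o(t^2).  Then C <= 0 (otherwise A grows quadratically), hence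
   C(t) <= -c / (2t), hence B(t) <= B(1) - (c/2) ln t, so A eventually becomes negative.

   Ck only provides partial derivatives along the coordinate lines, so Green's identity is
   obtained by letting h -> 0 in summation by parts for the discrete Laplacian of step h. *)

theory Submission
  imports Defs "HOL-Real_Asymp.Real_Asymp"
begin

lemma Ck_imp_continuous_on: "Ck k f \<Longrightarrow> continuous_on UNIV f"
  by (cases k) auto

lemma Ck_Suc_imp_Ck: "Ck (Suc k) f \<Longrightarrow> Ck k f"
proof (induction k arbitrary: f)
  case 0
  then show ?case by simp
next
  case (Suc k)
  then show ?case by (metis Ck.simps(2))
qed

lemma Ck_mono: "k \<le> l \<Longrightarrow> Ck l f \<Longrightarrow> Ck k f"
  by (induction k rule: inc_induct) (blast intro: Ck_Suc_imp_Ck)+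

lemma has_real_derivative_partial:
  fixes f :: "real^'n::finite \<Rightarrow> real"
  assumes "f differentiable (at x)"
  shows "((\<lambda>t. f (x + t *\<^sub>R axis i 1)) has_real_derivative partial i f x) (at 0)"
proof -
  have "(\<lambda>t. f (x + t *\<^sub>R axis i 1)) differentiable (at 0)"
    using differentiable_chain_at[of "\<lambda>t::real. x + t *\<^sub>R axis i 1" 0 f] assms
    by (simp add: o_def)
  then show ?thesis
    unfolding partial_def using DERIV_deriv_iff_real_differentiable by blast
qed

lemma partial_add:
  fixes f g :: "real^'n::finite \<Rightarrow> real"
  assumes "f differentiable (at x)" "g differentiable (at x)"
  shows "partial i (\<lambda>x. f x + g x) x = partial i f x + partial i g x"
  unfolding partial_def
  by (intro DERIV_imp_deriv derivative_intros has_real_derivative_partial[unfolded partial_def] assms)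

lemma Ck_add: "Ck k f \<Longrightarrow> Ck k g \<Longrightarrow> Ck k (\<lambda>x. f x + g x)"
proof (induction k arbitrary: f g)
  case 0
  then show ?case by (auto intro: continuous_on_add)
next
  case (Suc k)
  have "partial i (\<lambda>x. f x + g x) = (\<lambda>x. partial i f x + partial i g x)" for i
    using Suc.prems by (auto intro!: ext partial_add)
  then show ?case
    using Suc by (auto intro: continuous_on_add)
qed

lemma Ck_const_zero: "Ck k (\<lambda>x. 0)"
proof (induction k)
  case (Suc k)
  then show ?case by (simp add: partial_def[abs_def])
qed simp

lemma Ck_sum: "finite I \<Longrightarrow> (\<And>i. i \<in> I \<Longrightarrow> Ck k (f i)) \<Longrightarrow> Ck k (\<lambda>x. \<Sum>i\<in>I. f i x)"
  by (induction I rule: finite_induct) (auto intro: Ck_add Ck_const_zero)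

lemma Ck_laplacian: "Ck (k + 2) f \<Longrightarrow> Ck k (laplacian f)"
  unfolding laplacian_def[abs_def] by (intro Ck_sum) (auto simp: numeral_2_eq_2)

lemma has_real_derivative_along_line:
  fixes f :: "'a::real_normed_vector \<Rightarrow> real"
  assumes "\<And>y. ((\<lambda>t. f (y + t *\<^sub>R e)) has_real_derivative f' y) (at 0)"
  shows "((\<lambda>t. f (x + t *\<^sub>R e)) has_real_derivative f' (x + s *\<^sub>R e)) (at s)"
proof -
  have "((\<lambda>t. f (x + (t + s) *\<^sub>R e)) has_real_derivative f' (x + s *\<^sub>R e)) (at 0)"
    using assms[of "x + s *\<^sub>R e"] by (simp add: algebra_simps scaleR_add_left)
  then show ?thesis
    using DERIV_shift[of "\<lambda>t. f (x + t *\<^sub>R e)" _ 0 s] by simp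
qed

definition continuous_pure_second_partials ::
    "(real^'n::finite \<Rightarrow> real) \<Rightarrow> ('n \<Rightarrow> real^'n \<Rightarrow> real) \<Rightarrow> ('n \<Rightarrow> real^'n \<Rightarrow> real) \<Rightarrow> bool" where
  "continuous_pure_second_partials f f' f'' \<longleftrightarrow>
     (\<forall>i x. ((\<lambda>t. f (x + t *\<^sub>R axis i 1)) has_real_derivative f' i x) (at 0)
          \<and> ((\<lambda>t. f' i (x + t *\<^sub>R axis i 1)) has_real_derivative f'' i x) (at 0))
     \<and> (\<forall>i. continuous_on UNIV (f'' i))"

lemma Ck2_imp_continuous_pure_second_partials:
  "Ck 2 f \<Longrightarrow> continuous_pure_second_partials f (\<lambda>i. partial i f) (\<lambda>i. partial i (partial i f))"
  unfolding continuous_pure_second_partials_def numeral_2_eq_2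
  by (auto intro!: has_real_derivative_partial dest: Ck_imp_continuous_on)

section \<open>The discrete Laplacian\<close>

lemma symmetric_second_difference_mean_value:
  fixes g g' g'' :: "real \<Rightarrow> real"
  assumes g': "\<And>s. (g has_real_derivative g' s) (at s)"
    and g'': "\<And>s. (g' has_real_derivative g'' s) (at s)"
  shows "\<exists>s. \<bar>s\<bar> \<le> \<bar>h\<bar> \<and> g h + g (- h) - 2 * g 0 = (g'' s + g'' (- s)) / 2 * h\<^sup>2"
proof -
  define k where "k m = [\<lambda>s. g s + g (- s) - 2 * g 0, \<lambda>s. g' s - g' (- s), \<lambda>s. g'' s + g'' (- s)] ! m"
    for m
  have "(k m has_real_derivative k (Suc m) s) (at s)" if "m < 2" for m s
  proof -
    have "m = 0 \<or> m = 1"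
      using that by auto
    then show ?thesis
      unfolding k_def
      by (elim disjE) (auto intro!: derivative_eq_intros g' g'' DERIV_mirror[THEN iffD1, OF g'] DERIV_mirror[THEN iffD1, OF g''])
  qed
  then obtain s where "\<bar>s\<bar> \<le> \<bar>h\<bar>" "k 0 h = (\<Sum>m<2. k m 0 / fact m * h ^ m) + k 2 s / fact 2 * h ^ 2"
    using Maclaurin_bi_le[of k "k 0" 2 h] by auto
  then show ?thesis
    by (intro exI[of _ s]) (simp add: k_def numeral_2_eq_2)
qed

lemma uniform_limit_second_difference_quotient:
  fixes f :: "real^'n::finite \<Rightarrow> real"
  assumes "continuous_pure_second_partials f f' f''"
  shows "uniform_limit (cball 0 r)
           (\<lambda>h x. (f (x + h *\<^sub>R axis i 1) + f (x - h *\<^sub>R axis i 1) - 2 * f x) / h\<^sup>2) (f'' i) (at 0)"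
proof (rule uniform_limitI)
  fix \<epsilon> :: real
  assume "\<epsilon> > 0"
  have f': "((\<lambda>t. f (x + t *\<^sub>R axis i 1)) has_real_derivative f' i (x + s *\<^sub>R axis i 1)) (at s)"
    and f'': "((\<lambda>t. f' i (x + t *\<^sub>R axis i 1)) has_real_derivative f'' i (x + s *\<^sub>R axis i 1)) (at s)"
    for x s
    using assms unfolding continuous_pure_second_partials_def
    by (blast intro: has_real_derivative_along_line)+
  have "uniformly_continuous_on (cball 0 (r + 1)) (f'' i)"
    using assms unfolding continuous_pure_second_partials_def
    by (blast intro: compact_uniformly_continuous continuous_on_subset compact_cball)
  then obtain d where "d > 0" and d: "\<And>x y. x \<in> cball 0 (r + 1) \<Longrightarrow> y \<in> cball 0 (r + 1) \<Longrightarrow>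
      dist y x < d \<Longrightarrow> \<bar>f'' i y - f'' i x\<bar> < \<epsilon>"
    using \<open>\<epsilon> > 0\<close> unfolding uniformly_continuous_on_def dist_real_def by metis
  have "\<forall>\<^sub>F h in at (0::real). h \<noteq> 0 \<and> \<bar>h\<bar> < min d 1"
    using \<open>d > 0\<close> by (auto simp: eventually_at dist_real_def intro!: exI[of _ "min d 1"])
  then show "\<forall>\<^sub>F h in at 0. \<forall>x\<in>cball 0 r.
      dist ((f (x + h *\<^sub>R axis i 1) + f (x - h *\<^sub>R axis i 1) - 2 * f x) / h\<^sup>2) (f'' i x) < \<epsilon>"
  proof eventually_elim
    case (elim h)
    show ?case
    proof
      fix x :: "real^'n"
      assume x: "x \<in> cball 0 r"
      obtain s where "\<bar>s\<bar> \<le> \<bar>h\<bar>" and mean_value: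
        "f (x + h *\<^sub>R axis i 1) + f (x - h *\<^sub>R axis i 1) - 2 * f x
           = (f'' i (x + s *\<^sub>R axis i 1) + f'' i (x - s *\<^sub>R axis i 1)) / 2 * h\<^sup>2"
        using symmetric_second_difference_mean_value[OF f'[of x] f''[of x], of h] by auto
      have near: "\<bar>f'' i (x + c *\<^sub>R axis i 1) - f'' i x\<bar> < \<epsilon>" if "\<bar>c\<bar> \<le> \<bar>s\<bar>" for c
      proof (rule d)
        show "x \<in> cball 0 (r + 1)"
          using x by simp
        show "x + c *\<^sub>R axis i 1 \<in> cball 0 (r + 1)"
          using x that elim norm_triangle_ineq[of x "c *\<^sub>R axis i 1"] \<open>\<bar>s\<bar> \<le> \<bar>h\<bar>\<close> by simp
        show "dist (x + c *\<^sub>R axis i 1) x < d"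
          using that elim \<open>\<bar>s\<bar> \<le> \<bar>h\<bar>\<close> by (simp add: dist_norm)
      qed
      have "\<bar>f'' i (x + s *\<^sub>R axis i 1) - f'' i x\<bar> < \<epsilon>" "\<bar>f'' i (x - s *\<^sub>R axis i 1) - f'' i x\<bar> < \<epsilon>"
        using near[of s] near[of "- s"] by simp_all
      then have "\<bar>(f'' i (x + s *\<^sub>R axis i 1) + f'' i (x - s *\<^sub>R axis i 1)) / 2 - f'' i x\<bar> < \<epsilon>"
        by (simp add: abs_less_iff field_simps)
      then show
        "dist ((f (x + h *\<^sub>R axis i 1) + f (x - h *\<^sub>R axis i 1) - 2 * f x) / h\<^sup>2) (f'' i x) < \<epsilon>"
        using elim by (simp add: mean_value dist_real_def)
    qed
  qed
qed

lemma uniform_limit_sum: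
  fixes f :: "'i \<Rightarrow> 'a \<Rightarrow> 'b \<Rightarrow> 'c::real_normed_vector"
  assumes "finite I" "\<And>i. i \<in> I \<Longrightarrow> uniform_limit X (f i) (l i) F"
  shows "uniform_limit X (\<lambda>a b. \<Sum>i\<in>I. f i a b) (\<lambda>b. \<Sum>i\<in>I. l i b) F"
  using assms
proof (induction I rule: finite_induct)
  case empty
  show ?case by (simp add: uniform_limit_const)
next
  case (insert i I)
  then show ?case by (simp add: uniform_limit_add)
qed

definition discrete_laplacian :: "real \<Rightarrow> (real^'n::finite \<Rightarrow> real) \<Rightarrow> real^'n \<Rightarrow> real" where
  "discrete_laplacian h f x =
     (\<Sum>i\<in>UNIV. (f (x + h *\<^sub>R axis i 1) + f (x - h *\<^sub>R axis i 1) - 2 * f x) / h\<^sup>2)"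

lemma uniform_limit_discrete_laplacian:
  assumes "continuous_pure_second_partials f f' f''"
  shows "uniform_limit (cball 0 r) (\<lambda>h. discrete_laplacian h f) (\<lambda>x. \<Sum>i\<in>UNIV. f'' i x) (at 0)"
  unfolding discrete_laplacian_def[abs_def]
  by (intro uniform_limit_sum uniform_limit_second_difference_quotient[OF assms]) simp

lemma continuous_on_translate:
  fixes f :: "'a::real_normed_vector \<Rightarrow> 'b::topological_space"
  shows "continuous_on UNIV f \<Longrightarrow> continuous_on UNIV (\<lambda>x. f (x + c))"
  by (rule continuous_on_compose2[of UNIV f]) (auto intro!: continuous_intros)

lemma continuous_on_discrete_laplacian:
  assumes "continuous_on UNIV f"
  shows "continuous_on UNIV (discrete_laplacian h f)"
proof -
  have "continuous_on UNIV (\<lambda>x. f (x + c))" "continuous_on UNIV (\<lambda>x. f (x - c))" for c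
    using continuous_on_translate[OF assms, of c] continuous_on_translate[OF assms, of "- c"] by simp_all
  then show ?thesis
    unfolding discrete_laplacian_def[abs_def] divide_inverse
    by (intro continuous_on_sum continuous_on_mult_right continuous_on_diff continuous_on_add
              continuous_on_mult_left continuous_on_const assms)
qed

definition cube :: "real \<Rightarrow> (real^'n::finite) set" where
  "cube r = cbox (- (\<chi> i. r)) (\<chi> i. r)"

lemma mem_cube: "x \<in> cube r \<longleftrightarrow> (\<forall>i. \<bar>x $ i\<bar> \<le> r)"
  unfolding cube_def mem_box_cart by (simp add: abs_le_iff minus_le_iff conj_commute)

lemma cube_mono: "r \<le> R \<Longrightarrow> cube r \<subseteq> cube R"
  unfolding subset_iff mem_cube by (meson order_trans)

lemma cube_subset_cball: "cube r \<subseteq> cball (0::real^'n::finite) (CARD('n) * r)" for r :: real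
proof
  fix x :: "real^'n"
  assume "x \<in> cube r"
  then have "(\<Sum>i\<in>UNIV. \<bar>x $ i\<bar>) \<le> (\<Sum>i\<in>(UNIV::'n set). r)"
    by (intro sum_mono) (simp add: mem_cube)
  then show "x \<in> cball 0 (CARD('n) * r)"
    using norm_le_l1_cart[of x] by simp
qed

lemma measure_cube: "0 \<le> r \<Longrightarrow> measure lborel (cube r :: (real^'n::finite) set) = (2 * r) ^ CARD('n)"
proof -
  assume "0 \<le> r"
  then have "cube r \<noteq> {}"
    using mem_cube[of 0 r] by auto
  then show ?thesis
    unfolding cube_def by (subst content_cbox_cart) (auto simp: prod_constant)
qed

lemma add_not_mem_cube:
  assumes "x \<notin> cube (r + 1)" "norm c \<le> 1"
  shows "x + c \<notin> cube r"
proof -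
  obtain i where "r + 1 < \<bar>x $ i\<bar>"
    using assms(1) by (auto simp: mem_cube not_le)
  moreover have "\<bar>c $ i\<bar> \<le> 1"
    using component_le_norm_cart[of c i] assms(2) by linarith
  ultimately have "r < \<bar>(x + c) $ i\<bar>"
    by auto
  then show ?thesis
    by (auto simp: mem_cube not_le)
qed

lemma inner_le_if_mem_cube:
  fixes x :: "real^'n::finite" and r :: real
  assumes "x \<in> cube r"
  shows "x \<bullet> x \<le> CARD('n) * r\<^sup>2"
proof -
  have "\<bar>x $ i\<bar>\<^sup>2 \<le> r\<^sup>2" for i
    using assms by (intro power_mono) (auto simp: mem_cube)
  then have "x $ i * x $ i \<le> r\<^sup>2" for i
    by (simp add: power2_eq_square)
  then have "(\<Sum>i\<in>UNIV. x $ i * x $ i) \<le> (\<Sum>i\<in>(UNIV::'n set). r\<^sup>2)"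
    by (intro sum_mono)
  then show ?thesis
    by (simp add: inner_vec_def)
qed

lemma inner_gt_if_not_mem_cube: "x \<notin> cube r \<Longrightarrow> 0 \<le> r \<Longrightarrow> r\<^sup>2 < x \<bullet> x" for x :: "real^'n::finite"
proof -
  assume "x \<notin> cube r" "0 \<le> r"
  then obtain i where "r < \<bar>x $ i\<bar>"
    by (auto simp: mem_cube not_le)
  then have "r < norm x"
    using component_le_norm_cart[of x i] by simp
  then show ?thesis
    using \<open>0 \<le> r\<close> by (simp add: power2_norm_eq_inner[symmetric] power_strict_mono)
qed

lemma has_integral_UNIV_if_vanishes_outside:
  fixes g :: "'a::euclidean_space \<Rightarrow> 'b::banach"
  assumes "(g has_integral I) S" "\<And>x. x \<notin> S \<Longrightarrow> g x = 0"
  shows "(g has_integral I) UNIV"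
proof -
  have "(\<lambda>x. if x \<in> S then g x else 0) = g"
    using assms(2) by auto
  then show ?thesis
    using has_integral_restrict_UNIV[of S g I] assms(1) by simp
qed

lemma has_integral_integral_cube:
  "continuous_on UNIV g \<Longrightarrow> (g has_integral integral (cube r) g) (cube r)"
  for g :: "real^'n::finite \<Rightarrow> real"
  unfolding cube_def
  by (rule integrable_integral, rule integrable_continuous) (rule continuous_on_subset, auto)

lemma has_integral_UNIV_if_vanishes_outside_cube:
  fixes g :: "real^'n::finite \<Rightarrow> real"
  assumes "continuous_on UNIV g" "\<And>x. x \<notin> cube r \<Longrightarrow> g x = 0"
  shows "(g has_integral integral (cube r) g) UNIV"
  using has_integral_UNIV_if_vanishes_outside[OF has_integral_integral_cube[OF assms(1)] assms(2)] .

lemma integral_UNIV_eq_cube: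
  fixes g :: "real^'n::finite \<Rightarrow> real"
  assumes "continuous_on UNIV g" "\<And>x. x \<notin> cube r \<Longrightarrow> g x = 0"
  shows "integral UNIV g = integral (cube r) g"
  using has_integral_UNIV_if_vanishes_outside_cube[OF assms] by blast

lemma integrable_on_UNIV_if_vanishes_outside_cube:
  fixes g :: "real^'n::finite \<Rightarrow> real"
  assumes "continuous_on UNIV g" "\<And>x. x \<notin> cube r \<Longrightarrow> g x = 0"
  shows "g integrable_on UNIV"
  using has_integral_UNIV_if_vanishes_outside_cube[OF assms] by blast

lemma integral_translation:
  fixes g :: "real^'n::finite \<Rightarrow> real"
  assumes "continuous_on UNIV g" "\<And>x. x \<notin> cube r \<Longrightarrow> g x = 0"
  shows "integral UNIV (\<lambda>x. g (x + c)) = integral UNIV g"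
proof -
  let ?a = "- (\<chi> i. r) :: real^'n" and ?b = "\<chi> i. r :: real^'n"
  have "(g has_integral integral (cube r) g) (cbox ?a ?b)"
    using has_integral_integral_cube[OF assms(1)] by (simp add: cube_def)
  from has_integral_affinity'[OF this, of 1 c]
  have "((\<lambda>x. g (x + c)) has_integral integral (cube r) g) (cbox (?a - c) (?b - c))"
    by simp
  moreover have "g (x + c) = 0" if "x \<notin> cbox (?a - c) (?b - c)" for x
  proof -
    have "\<exists>i. \<not> (?a - c) $ i \<le> x $ i \<or> \<not> x $ i \<le> (?b - c) $ i"
      using that unfolding mem_box_cart by blast
    then obtain i where "x $ i < - r - c $ i \<or> r - c $ i < x $ i"
      by (auto simp: not_le)
    then have "r < \<bar>(x + c) $ i\<bar>"
      by auto
    then show ?thesis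
      using assms(2) by (meson mem_cube not_le)
  qed
  ultimately have "((\<lambda>x. g (x + c)) has_integral integral (cube r) g) UNIV"
    by (rule has_integral_UNIV_if_vanishes_outside)
  then show ?thesis
    using integral_UNIV_eq_cube[OF assms] by (simp add: integral_unique)
qed

lemma abs_integral_le_if_vanishes_outside_cube:
  fixes g :: "real^'n::finite \<Rightarrow> real"
  assumes "continuous_on UNIV g" "\<And>x. x \<notin> cube r \<Longrightarrow> g x = 0"
    and "\<And>x. x \<in> cube r \<Longrightarrow> \<bar>g x\<bar> \<le> B" and "0 \<le> r"
  shows "\<bar>integral UNIV g\<bar> \<le> B * (2 * r) ^ CARD('n)"
proof -
  have "0 \<le> B"
    using assms(3)[of 0] assms(4) by (auto simp: mem_cube)
  have "(g has_integral integral (cube r) g) (cube r)"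
    using has_integral_integral_cube[OF assms(1)] .
  then have "norm (integral (cube r) g) \<le> B * measure lborel (cube r :: (real^'n) set)"
    unfolding cube_def by (rule has_integral_bound[OF \<open>0 \<le> B\<close>]) (use assms(3) in \<open>auto simp: cube_def\<close>)
  then show ?thesis
    using integral_UNIV_eq_cube[OF assms(1,2)] measure_cube[OF assms(4), where 'n = 'n] by simp
qed

lemma tendsto_integral_uniform_limit_on_cube:
  fixes g :: "'a \<Rightarrow> real^'n::finite \<Rightarrow> real"
  assumes "uniform_limit (cube r) g G F" "F \<noteq> bot"
    and "\<And>a. continuous_on UNIV (g a)"
    and "\<forall>\<^sub>F a in F. \<forall>x. x \<notin> cube r \<longrightarrow> g a x = 0" "\<And>x. x \<notin> cube r \<Longrightarrow> G x = 0"
  shows "((\<lambda>a. integral UNIV (g a)) \<longlongrightarrow> integral UNIV G) F"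
proof -
  obtain I J where I: "\<And>a. (g a has_integral I a) (cube r)" and J: "(G has_integral J) (cube r)"
    and "(I \<longlongrightarrow> J) F"
  proof (rule uniform_limit_integral_cbox[of g "- (\<chi> i. r)" "\<chi> i. r" G F])
    show "uniform_limit (cbox (- (\<chi> i. r)) (\<chi> i. r)) g G F"
      using assms(1) by (simp add: cube_def)
    show "continuous_on (cbox (- (\<chi> i. r)) (\<chi> i. r)) (g a)" for a
      using assms(3) continuous_on_subset by blast
  qed (auto simp: cube_def assms(2))
  have "integral UNIV G = J"
    using has_integral_UNIV_if_vanishes_outside[OF J assms(5)] by (rule integral_unique)
  moreover have "\<forall>\<^sub>F a in F. I a = integral UNIV (g a)"
    using assms(4)
  proof eventually_elim
    case (elim a)
    then have "(g a has_integral I a) UNIV"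
      by (intro has_integral_UNIV_if_vanishes_outside[OF I]) auto
    then show ?case
      by (simp add: integral_unique)
  qed
  ultimately show ?thesis
    using Lim_transform_eventually[OF \<open>(I \<longlongrightarrow> J) F\<close>] by simp
qed

section \<open>Green's identity\<close>

lemma discrete_laplacian_vanishes_outside_cube:
  assumes "\<And>x. x \<notin> cube r \<Longrightarrow> \<phi> x = 0" "\<bar>h\<bar> \<le> 1" "x \<notin> cube (r + 1)"
  shows "discrete_laplacian h \<phi> x = 0"
proof -
  have "x \<notin> cube r"
    using assms(3) cube_mono[of r "r + 1"] by auto
  moreover have shifted: "x + c *\<^sub>R axis i 1 \<notin> cube r" if "\<bar>c\<bar> \<le> 1" for c i
    using add_not_mem_cube[OF assms(3)] that by simp
  ultimately show ?thesis
    using assms(1,2) shifted[of h] shifted[of "- h"] by (simp add: discrete_laplacian_def)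
qed

lemma has_integral_shift_product_diff:
  fixes v \<phi> :: "real^'n::finite \<Rightarrow> real"
  assumes cv: "continuous_on UNIV v" and c\<phi>: "continuous_on UNIV \<phi>"
    and supp: "\<And>x. x \<notin> cube r \<Longrightarrow> \<phi> x = 0" and "norm c \<le> 1"
  shows "((\<lambda>x. v (x + c) * \<phi> x - v x * \<phi> (x - c)) has_integral 0) UNIV"
proof -
  have c\<phi>': "continuous_on UNIV (\<lambda>x. \<phi> (x - c))"
    using continuous_on_translate[OF c\<phi>, of "- c"] by simp
  have cprod: "continuous_on UNIV (\<lambda>x. v x * \<phi> (x - c))"
    by (intro continuous_intros cv c\<phi>')
  have vanish: "v x * \<phi> (x - c) = 0" if "x \<notin> cube (r + 1)" for x
    using add_not_mem_cube[OF that, of "- c"] \<open>norm c \<le> 1\<close> supp by simp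
  have i1: "(\<lambda>x. v (x + c) * \<phi> x) integrable_on UNIV"
    by (rule integrable_on_UNIV_if_vanishes_outside_cube[of _ r])
       (auto intro!: continuous_intros continuous_on_translate cv c\<phi> simp: supp)
  have i2: "(\<lambda>x. v x * \<phi> (x - c)) integrable_on UNIV"
    using integrable_on_UNIV_if_vanishes_outside_cube[OF cprod vanish] .
  have "integral UNIV (\<lambda>x. v (x + c) * \<phi> x) = integral UNIV (\<lambda>x. v x * \<phi> (x - c))"
    using integral_translation[OF cprod vanish, where c = c] by simp
  then show ?thesis
    using has_integral_diff[OF integrable_integral[OF i1] integrable_integral[OF i2]] by simp
qed

lemma integral_discrete_laplacian_mult_swap:
  fixes v \<phi> :: "real^'n::finite \<Rightarrow> real"
  assumes cv: "continuous_on UNIV v" and c\<phi>: "continuous_on UNIV \<phi>"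
    and supp: "\<And>x. x \<notin> cube r \<Longrightarrow> \<phi> x = 0" and "\<bar>h\<bar> \<le> 1"
  shows "integral UNIV (\<lambda>x. discrete_laplacian h v x * \<phi> x)
       = integral UNIV (\<lambda>x. v x * discrete_laplacian h \<phi> x)"
proof -
  define P where "P c x = v (x + c) * \<phi> x - v x * \<phi> (x - c)" for c x
  have P: "(P c has_integral 0) UNIV" if "norm c \<le> 1" for c
    unfolding P_def[abs_def] using cv c\<phi> supp that by (rule has_integral_shift_product_diff)
  have "discrete_laplacian h v x * \<phi> x - v x * discrete_laplacian h \<phi> x
      = (\<Sum>i\<in>UNIV. (P (h *\<^sub>R axis i 1) x + P (- (h *\<^sub>R axis i 1)) x) / h\<^sup>2)" for x
    unfolding discrete_laplacian_def P_def sum_distrib_right sum_distrib_left sum_subtractf[symmetric]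
    by (intro sum.cong refl) (cases "h = 0", simp_all add: field_simps)
  moreover have "((\<lambda>x. \<Sum>i\<in>UNIV. (P (h *\<^sub>R axis i 1) x + P (- (h *\<^sub>R axis i 1)) x) / h\<^sup>2)
                  has_integral 0) UNIV"
  proof -
    have "norm (h *\<^sub>R axis i 1 :: real^'n) \<le> 1" "norm (- (h *\<^sub>R axis i 1) :: real^'n) \<le> 1" for i
      using \<open>\<bar>h\<bar> \<le> 1\<close> by simp_all
    then have "((\<lambda>x. (P (h *\<^sub>R axis i 1) x + P (- (h *\<^sub>R axis i 1)) x) / h\<^sup>2) has_integral 0) UNIV"
      for i using has_integral_divide[OF has_integral_add[OF P P]] by simp
    then show ?thesis
      using has_integral_sum[of UNIV "\<lambda>i x. (P (h *\<^sub>R axis i 1) x + P (- (h *\<^sub>R axis i 1)) x) / h\<^sup>2"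
          "\<lambda>i. 0" UNIV] by simp
  qed
  ultimately have diff: "((\<lambda>x. discrete_laplacian h v x * \<phi> x - v x * discrete_laplacian h \<phi> x)
                    has_integral 0) UNIV"
    by simp
  have lhs: "(\<lambda>x. discrete_laplacian h v x * \<phi> x) integrable_on UNIV"
    by (rule integrable_on_UNIV_if_vanishes_outside_cube[of _ r])
       (auto intro!: continuous_intros continuous_on_discrete_laplacian cv c\<phi> simp: supp)
  have rhs: "(\<lambda>x. v x * discrete_laplacian h \<phi> x) integrable_on UNIV"
    by (rule integrable_on_UNIV_if_vanishes_outside_cube[of _ "r + 1"])
       (auto intro!: continuous_intros continuous_on_discrete_laplacian cv c\<phi>
             simp: discrete_laplacian_vanishes_outside_cube[OF supp \<open>\<bar>h\<bar> \<le> 1\<close>])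
  show ?thesis
    using integral_diff[OF lhs rhs] integral_unique[OF diff] by simp
qed

lemma integral_laplacian_mult_swap:
  fixes v \<phi> :: "real^'n::finite \<Rightarrow> real"
  assumes v: "continuous_pure_second_partials v v' v''" and cv: "continuous_on UNIV v"
    and \<phi>: "continuous_pure_second_partials \<phi> \<phi>' \<phi>''" and c\<phi>: "continuous_on UNIV \<phi>"
    and supp: "\<And>x. x \<notin> cube r \<Longrightarrow> \<phi> x = 0" "\<And>i x. x \<notin> cube r \<Longrightarrow> \<phi>'' i x = 0"
  shows "integral UNIV (\<lambda>x. (\<Sum>i\<in>UNIV. v'' i x) * \<phi> x) = integral UNIV (\<lambda>x. v x * (\<Sum>i\<in>UNIV. \<phi>'' i x))"
proof -
  let ?C = "cube (r + 1) :: (real^'n) set"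
  have bounded: "bounded (f ` ?C)" if "continuous_on UNIV f" for f :: "real^'n \<Rightarrow> real"
    unfolding cube_def
    by (intro compact_imp_bounded compact_continuous_image continuous_on_subset[OF that]) auto
  have cont2: "continuous_on UNIV (\<lambda>x. \<Sum>i\<in>UNIV. v'' i x)" "continuous_on UNIV (\<lambda>x. \<Sum>i\<in>UNIV. \<phi>'' i x)"
    using v \<phi> by (auto simp: continuous_pure_second_partials_def intro!: continuous_on_sum)
  have lim: "uniform_limit ?C (\<lambda>h. discrete_laplacian h f) (\<lambda>x. \<Sum>i\<in>UNIV. f'' i x) (at 0)"
    if "continuous_pure_second_partials f f' f''" for f f' f''
    using uniform_limit_on_subset[OF uniform_limit_discrete_laplacian[OF that] cube_subset_cball] .
  have outside: "x \<notin> cube r" if "x \<notin> ?C" for x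
    using that cube_mono[of r "r + 1"] by auto
  have small: "\<forall>\<^sub>F h in at (0::real). \<bar>h\<bar> \<le> 1"
    by (auto simp: eventually_at intro!: exI[of _ 1])
  have lim_v: "((\<lambda>h. integral UNIV (\<lambda>x. discrete_laplacian h v x * \<phi> x))
          \<longlongrightarrow> integral UNIV (\<lambda>x. (\<Sum>i\<in>UNIV. v'' i x) * \<phi> x)) (at 0)"
  proof (rule tendsto_integral_uniform_limit_on_cube)
    show "uniform_limit ?C (\<lambda>h x. discrete_laplacian h v x * \<phi> x) (\<lambda>x. (\<Sum>i\<in>UNIV. v'' i x) * \<phi> x) (at 0)"
      by (intro uniform_limit_intros lim[OF v] bounded cont2 c\<phi>)
  qed (auto intro!: always_eventually continuous_intros continuous_on_discrete_laplacian cv c\<phi>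
           simp: supp(1)[OF outside])
  have lim_\<phi>: "((\<lambda>h. integral UNIV (\<lambda>x. v x * discrete_laplacian h \<phi> x))
          \<longlongrightarrow> integral UNIV (\<lambda>x. v x * (\<Sum>i\<in>UNIV. \<phi>'' i x))) (at 0)"
  proof (rule tendsto_integral_uniform_limit_on_cube)
    show "uniform_limit ?C (\<lambda>h x. v x * discrete_laplacian h \<phi> x) (\<lambda>x. v x * (\<Sum>i\<in>UNIV. \<phi>'' i x)) (at 0)"
      by (intro uniform_limit_intros lim[OF \<phi>] bounded cont2 cv)
    show "\<forall>\<^sub>F h in at 0. \<forall>x. x \<notin> ?C \<longrightarrow> v x * discrete_laplacian h \<phi> x = 0"
      using small by eventually_elim (simp add: discrete_laplacian_vanishes_outside_cube[OF supp(1)])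
  qed (auto intro!: continuous_intros continuous_on_discrete_laplacian cv c\<phi> simp: supp(2)[OF outside])
  have "\<forall>\<^sub>F h in at 0. integral UNIV (\<lambda>x. discrete_laplacian h v x * \<phi> x)
                         = integral UNIV (\<lambda>x. v x * discrete_laplacian h \<phi> x)"
    using small by eventually_elim (rule integral_discrete_laplacian_mult_swap[OF cv c\<phi> supp(1)])
  from Lim_transform_eventually[OF lim_v this] show ?thesis
    by (rule tendsto_unique[OF at_neq_bot _ lim_\<phi>])
qed

section \<open>Bump kernels on \<real>^4\<close>

definition pos_pow :: "nat \<Rightarrow> real \<Rightarrow> real" where
  "pos_pow n y = (max 0 y) ^ n"

lemma pos_pow_nonneg: "0 \<le> pos_pow n y"
  by (simp add: pos_pow_def)

lemma pos_pow_eq_0: "y \<le> 0 \<Longrightarrow> 1 \<le> n \<Longrightarrow> pos_pow n y = 0"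
  by (simp add: pos_pow_def max_def)

lemma pos_pow_Suc: "1 \<le> n \<Longrightarrow> pos_pow (Suc n) y = y * pos_pow n y"
  by (cases "y \<le> 0") (auto simp: pos_pow_def max_def)

lemma continuous_on_pos_pow [continuous_intros]:
  "continuous_on S f \<Longrightarrow> continuous_on S (\<lambda>x. pos_pow n (f x))"
  unfolding pos_pow_def by (intro continuous_intros)

lemma has_real_derivative_pos_pow:
  assumes "2 \<le> n"
  shows "(pos_pow n has_real_derivative real n * pos_pow (n - 1) y) (at y)"
proof -
  consider "0 < y" | "y < 0" | "y = 0"
    by linarith
  then show ?thesis
  proof cases
    case 1
    have "((\<lambda>z. z ^ n) has_real_derivative real n * y ^ (n - 1)) (at y)"
      using DERIV_pow[of n y] by simp
    then have "(pos_pow n has_real_derivative real n * y ^ (n - 1)) (at y)"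
      by (rule has_field_derivative_transform_within_open[where S = "{0<..}"])
         (use 1 in \<open>auto simp: pos_pow_def\<close>)
    then show ?thesis
      using 1 by (simp add: pos_pow_def)
  next
    case 2
    have "(pos_pow n has_real_derivative 0) (at y)"
      by (rule has_field_derivative_transform_within_open[where f = "\<lambda>z. 0" and S = "{..<0}"])
         (use 2 assms in \<open>auto simp: pos_pow_def\<close>)
    then show ?thesis
      using 2 assms by (simp add: pos_pow_eq_0)
  next
    case 3
    have "((\<lambda>z. pos_pow n z / z) \<longlongrightarrow> 0) (at 0)"
    proof (rule Lim_null_comparison)
      show "\<forall>\<^sub>F z in at 0. norm (pos_pow n z / z) \<le> \<bar>z\<bar> ^ (n - 1)"
      proof (rule always_eventually, intro allI)
        fix z :: real
        have "\<bar>pos_pow n z\<bar> \<le> \<bar>z\<bar> ^ n"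
          unfolding pos_pow_def by (simp add: power_mono)
        also have "\<dots> = \<bar>z\<bar> * \<bar>z\<bar> ^ (n - 1)"
          using assms by (cases n) auto
        finally show "norm (pos_pow n z / z) \<le> \<bar>z\<bar> ^ (n - 1)"
          by (cases "z = 0") (auto simp: divide_le_eq abs_divide mult.commute)
      qed
      show "((\<lambda>z::real. \<bar>z\<bar> ^ (n - 1)) \<longlongrightarrow> 0) (at 0)"
        using assms by (auto intro!: tendsto_eq_intros)
    qed
    moreover have "pos_pow n 0 = 0" "pos_pow (n - 1) 0 = 0"
      using assms by (simp_all add: pos_pow_eq_0)
    ultimately show ?thesis
      using 3 by (simp add: has_field_derivative_iff)
  qed
qed

definition bump :: "nat \<Rightarrow> real \<Rightarrow> real^4 \<Rightarrow> real" where
  "bump m t x = pos_pow m (2 * t - x \<bullet> x) / t ^ (m + 2)"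

definition bump_partial :: "nat \<Rightarrow> real \<Rightarrow> 4 \<Rightarrow> real^4 \<Rightarrow> real" where
  "bump_partial m t i x = - 2 * real m * pos_pow (m - 1) (2 * t - x \<bullet> x) * x $ i / t ^ (m + 2)"

definition bump_second_partial :: "nat \<Rightarrow> real \<Rightarrow> 4 \<Rightarrow> real^4 \<Rightarrow> real" where
  "bump_second_partial m t i x =
     (4 * real m * real (m - 1) * pos_pow (m - 2) (2 * t - x \<bullet> x) * (x $ i)\<^sup>2
      - 2 * real m * pos_pow (m - 1) (2 * t - x \<bullet> x)) / t ^ (m + 2)"

definition bump_dt :: "nat \<Rightarrow> real \<Rightarrow> real^4 \<Rightarrow> real" where
  "bump_dt m t x = 2 * real m * pos_pow (m - 1) (2 * t - x \<bullet> x) / t ^ (m + 2)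
                   - real (m + 2) * pos_pow m (2 * t - x \<bullet> x) / t ^ (m + 3)"

lemma continuous_on_bump [continuous_intros]: "continuous_on S (bump m t)"
  unfolding bump_def divide_inverse by (intro continuous_intros)

lemma continuous_on_bump_dt [continuous_intros]: "continuous_on S (bump_dt m t)"
  unfolding bump_dt_def divide_inverse by (intro continuous_intros)

lemma inner_along_axis:
  "(x + s *\<^sub>R axis i 1) \<bullet> (x + s *\<^sub>R axis i 1) = x \<bullet> x + 2 * s * x $ i + s\<^sup>2"
  by (simp add: inner_add_left inner_add_right inner_axis inner_axis' inner_commute
                power2_eq_square algebra_simps)

lemma continuous_pure_second_partials_bump:
  assumes "3 \<le> m"
  shows "continuous_pure_second_partials (bump m t) (bump_partial m t) (bump_second_partial m t)"
  unfolding continuous_pure_second_partials_def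
proof (intro conjI allI)
  fix i :: 4 and x :: "real^4"
  define a where "a s = 2 * t - (x \<bullet> x + 2 * s * x $ i + s\<^sup>2)" for s
  have a: "(a has_real_derivative - (2 * x $ i)) (at 0)"
    unfolding a_def by (auto intro!: derivative_eq_intros)
  have pos_pow_a: "((\<lambda>s. pos_pow k (a s)) has_real_derivative real k * pos_pow (k - 1) (a 0) * - (2 * x $ i)) (at 0)"
    if "2 \<le> k" for k
    using DERIV_chain2[OF has_real_derivative_pos_pow[OF that] a] by simp
  have "((\<lambda>s. pos_pow m (a s) / t ^ (m + 2)) has_real_derivative
          real m * pos_pow (m - 1) (a 0) * - (2 * x $ i) / t ^ (m + 2)) (at 0)"
    using assms by (intro DERIV_cdivide pos_pow_a) simp
  then show "((\<lambda>s. bump m t (x + s *\<^sub>R axis i 1)) has_real_derivative bump_partial m t i x) (at 0)"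
    unfolding bump_def bump_partial_def inner_along_axis a_def[symmetric]
    by (simp add: a_def algebra_simps)
  have "((\<lambda>s. pos_pow (m - 1) (a s)) has_real_derivative
          real (m - 1) * pos_pow (m - 2) (a 0) * - (2 * x $ i)) (at 0)"
  proof -
    have "2 \<le> m - 1" "m - 1 - 1 = m - 2"
      using assms by auto
    then show ?thesis
      using pos_pow_a[of "m - 1"] by simp
  qed
  moreover have "((\<lambda>s. x $ i + s) has_real_derivative 1) (at 0)"
    by (auto intro!: derivative_eq_intros)
  ultimately have "((\<lambda>s. - 2 * real m * (pos_pow (m - 1) (a s) * (x $ i + s)) / t ^ (m + 2))
      has_real_derivative - 2 * real m * (pos_pow (m - 1) (a 0) * 1
        + real (m - 1) * pos_pow (m - 2) (a 0) * - (2 * x $ i) * (x $ i + 0)) / t ^ (m + 2)) (at 0)"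
    by (intro DERIV_cdivide DERIV_cmult DERIV_mult')
  moreover have "- 2 * real m * (pos_pow (m - 1) (a 0) * 1
        + real (m - 1) * pos_pow (m - 2) (a 0) * - (2 * x $ i) * (x $ i + 0)) / t ^ (m + 2)
      = bump_second_partial m t i x"
    by (simp add: bump_second_partial_def a_def power2_eq_square algebra_simps)
  ultimately have "((\<lambda>s. - 2 * real m * pos_pow (m - 1) (a s) * (x $ i + s) / t ^ (m + 2))
               has_real_derivative bump_second_partial m t i x) (at 0)"
    by (simp add: mult.assoc)
  then show "((\<lambda>s. bump_partial m t i (x + s *\<^sub>R axis i 1)) has_real_derivative
                bump_second_partial m t i x) (at 0)"
    unfolding bump_partial_def inner_along_axis a_def[symmetric] by simp
next
  fix i :: 4
  show "continuous_on UNIV (bump_second_partial m t i)"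
    unfolding bump_second_partial_def divide_inverse by (intro continuous_intros)
qed

lemma sum_bump_second_partial:
  assumes "2 \<le> m" "t \<noteq> 0"
  shows "(\<Sum>i\<in>UNIV. bump_second_partial (Suc m) t i x) = 4 * (real m + 1) * bump_dt m t x"
proof -
  define a where "a = 2 * t - x \<bullet> x"
  define P where "P = pos_pow (m - 1) a"
  define T where "T = t ^ (m + 2)"
  have T: "t ^ (Suc m + 2) = T * t" "t ^ (m + 3) = T * t"
    by (simp_all add: T_def power_add eval_nat_numeral mult_ac)
  have "bump_second_partial (Suc m) t i x
      = (4 * (real m + 1) * real m * P * (x $ i)\<^sup>2 - 2 * (real m + 1) * pos_pow m a) / (T * t)" for i
    unfolding bump_second_partial_def T by (simp add: a_def P_def algebra_simps)
  moreover have "(\<Sum>i\<in>UNIV. (x $ i)\<^sup>2) = 2 * t - a"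
    by (simp add: inner_vec_def power2_eq_square a_def)
  ultimately have "(\<Sum>i\<in>UNIV. bump_second_partial (Suc m) t i x)
      = (4 * (real m + 1) * real m * P * (2 * t - a) - 8 * (real m + 1) * pos_pow m a) / (T * t)"
    by (simp add: sum_divide_distrib[symmetric] sum_subtractf sum_distrib_left[symmetric])
  also have "pos_pow m a = a * P"
    using pos_pow_Suc[of "m - 1" a] assms(1) by (simp add: P_def)
  also have "(4 * (real m + 1) * real m * P * (2 * t - a) - 8 * (real m + 1) * (a * P)) / (T * t)
      = 4 * (real m + 1) * (2 * real m * P / T - real (m + 2) * (a * P) / (T * t))"
    using assms(2) by (simp add: field_simps T_def)
  also have "\<dots> = 4 * (real m + 1) * bump_dt m t x"
    using pos_pow_Suc[of "m - 1" a] assms(1) unfolding bump_dt_def T by (simp add: a_def P_def T_def)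
  finally show ?thesis .
qed

lemma has_real_derivative_bump_dt:
  assumes "2 \<le> m" "0 < t"
  shows "((\<lambda>t. bump m t x) has_real_derivative bump_dt m t x) (at t)"
proof -
  have "((\<lambda>t. pos_pow m (2 * t - x \<bullet> x) / t ^ (m + 2)) has_real_derivative
          (real m * pos_pow (m - 1) (2 * t - x \<bullet> x) * 2 * t ^ (m + 2)
           - pos_pow m (2 * t - x \<bullet> x) * (real (m + 2) * t ^ (m + 1))) / (t ^ (m + 2) * t ^ (m + 2))) (at t)"
  proof (intro DERIV_divide DERIV_chain2[OF has_real_derivative_pos_pow[OF assms(1)]])
    show "((\<lambda>t. 2 * t - x \<bullet> x) has_real_derivative 2) (at t)"
      by (auto intro!: derivative_eq_intros)
    show "((\<lambda>t. t ^ (m + 2)) has_real_derivative real (m + 2) * t ^ (m + 1)) (at t)"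
      using DERIV_pow[of "m + 2" t] by simp
  qed (use assms in simp)
  moreover have "(real m * pos_pow (m - 1) (2 * t - x \<bullet> x) * 2 * t ^ (m + 2)
           - pos_pow m (2 * t - x \<bullet> x) * (real (m + 2) * t ^ (m + 1))) / (t ^ (m + 2) * t ^ (m + 2))
      = bump_dt m t x"
  proof -
    have T: "t ^ (m + 2) = t ^ (m + 1) * t" "t ^ (m + 3) = t ^ (m + 1) * t * t"
      by (simp_all add: power_add eval_nat_numeral mult_ac)
    show ?thesis
      unfolding bump_dt_def T using assms(2) by (simp add: field_simps)
  qed
  ultimately show ?thesis
    by (simp add: bump_def)
qed

lemma bump_eq_0: "2 * t \<le> x \<bullet> x \<Longrightarrow> 1 \<le> m \<Longrightarrow> bump m t x = 0"
  by (simp add: bump_def pos_pow_eq_0)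

lemma bump_second_partial_eq_0: "2 * t \<le> x \<bullet> x \<Longrightarrow> 3 \<le> m \<Longrightarrow> bump_second_partial m t i x = 0"
  by (simp add: bump_second_partial_def pos_pow_eq_0)

lemma bump_dt_eq_0: "2 * t \<le> x \<bullet> x \<Longrightarrow> 2 \<le> m \<Longrightarrow> bump_dt m t x = 0"
  by (simp add: bump_dt_def pos_pow_eq_0)

lemma bump_nonneg: "0 < t \<Longrightarrow> 0 \<le> bump m t x"
  by (simp add: bump_def pos_pow_nonneg)

lemma double_le_if_not_mem_cube: "x \<notin> cube r \<Longrightarrow> 0 \<le> r \<Longrightarrow> 2 * t \<le> r\<^sup>2 \<Longrightarrow> 2 * t \<le> x \<bullet> x"
  using inner_gt_if_not_mem_cube[of x r] by simp

lemma double_le_square_Suc: "0 \<le> t \<Longrightarrow> 2 * t \<le> (t + 1)\<^sup>2" for t :: real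
  by (simp add: power2_eq_square algebra_simps)

section \<open>Averages against the bump kernels\<close>

definition bump_average :: "nat \<Rightarrow> (real^4 \<Rightarrow> real) \<Rightarrow> real \<Rightarrow> real" where
  "bump_average m w t = integral UNIV (\<lambda>x. w x * bump m t x)"

lemma integral_laplacian_mult_bump:
  assumes "Ck 2 v" "3 \<le> m" "0 < t"
  shows "integral UNIV (\<lambda>x. laplacian v x * bump m t x)
       = integral UNIV (\<lambda>x. v x * (\<Sum>i\<in>UNIV. bump_second_partial m t i x))"
proof -
  have outside: "2 * t \<le> x \<bullet> x" if "x \<notin> cube (t + 1)" for x
    using double_le_if_not_mem_cube[OF that] double_le_square_Suc assms(3) by simp
  show ?thesis
    unfolding laplacian_def
  proof (rule integral_laplacian_mult_swap)
    show "continuous_pure_second_partials v (\<lambda>i. partial i v) (\<lambda>i. partial i (partial i v))"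
      using assms(1) by (rule Ck2_imp_continuous_pure_second_partials)
    show "continuous_pure_second_partials (bump m t) (bump_partial m t) (bump_second_partial m t)"
      using assms(2) by (rule continuous_pure_second_partials_bump)
    show "continuous_on UNIV v"
      using assms(1) by (rule Ck_imp_continuous_on)
    show "bump m t x = 0" if "x \<notin> cube (t + 1)" for x
      using bump_eq_0[OF outside[OF that]] assms(2) by simp
    show "bump_second_partial m t i x = 0" if "x \<notin> cube (t + 1)" for i x
      using bump_second_partial_eq_0[OF outside[OF that] assms(2)] .
  qed (rule continuous_on_bump)
qed

lemma has_real_derivative_integral_cube_bump:
  fixes w :: "real^4 \<Rightarrow> real"
  assumes w: "continuous_on UNIV w" and "2 \<le> m" "0 < a" "t \<in> {a<..<b}"
  shows "((\<lambda>s. integral (cube R) (\<lambda>x. w x * bump m s x)) has_real_derivative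
           integral (cube R) (\<lambda>x. w x * bump_dt m t x)) (at t)"
proof -
  let ?U = "{a<..<b}"
  have "((\<lambda>s. integral (cube R) (\<lambda>x. w x * bump m s x)) has_real_derivative
           integral (cube R) (\<lambda>x. w x * bump_dt m t x)) (at t within ?U)"
    unfolding cube_def
  proof (rule leibniz_rule_field_derivative[where fx = "\<lambda>s x. w x * bump_dt m s x"])
    fix s x
    assume "s \<in> ?U"
    then have "0 < s"
      using assms(3) by simp
    show "((\<lambda>s. w x * bump m s x) has_real_derivative w x * bump_dt m s x) (at s within ?U)"
      using has_real_derivative_bump_dt[OF assms(2) \<open>0 < s\<close>]
      by (rule has_field_derivative_at_within[OF DERIV_cmult])
  next
    fix s
    show "(\<lambda>x. w x * bump m s x) integrable_on cbox (- (\<chi> i. R)) (\<chi> i. R)"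
      by (rule integrable_continuous)
         (intro continuous_on_mult continuous_on_subset[OF w] continuous_on_bump subset_UNIV)
  next
    have cw: "continuous_on (?U \<times> UNIV) (\<lambda>p. w (snd p))"
      by (rule continuous_on_compose2[OF w continuous_on_snd]) auto
    have "continuous_on (?U \<times> UNIV) (\<lambda>p. w (snd p) * bump_dt m (fst p) (snd p))"
      unfolding bump_dt_def
    proof (intro continuous_intros cw)
      show "\<forall>p\<in>?U \<times> UNIV. fst p ^ (m + 2) \<noteq> 0" "\<forall>p\<in>?U \<times> UNIV. fst p ^ (m + 3) \<noteq> 0"
        using assms(3) by auto
    qed
    then show "continuous_on (?U \<times> cbox (- (\<chi> i. R)) (\<chi> i. R)) (\<lambda>(s, x). w x * bump_dt m s x)"
      by (auto simp: split_def intro: continuous_on_subset)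
  qed (use assms(4) in auto)
  then show ?thesis
    using at_within_open[OF assms(4)] by simp
qed

lemma has_real_derivative_bump_average_dt:
  fixes w :: "real^4 \<Rightarrow> real"
  assumes w: "continuous_on UNIV w" and "2 \<le> m" "0 < t"
  shows "(bump_average m w has_real_derivative integral UNIV (\<lambda>x. w x * bump_dt m t x)) (at t)"
proof -
  let ?U = "{t / 2 <..< 2 * t}" and ?C = "cube (2 * t + 1) :: (real^4) set"
  have outside: "2 * s \<le> x \<bullet> x" if "s \<in> ?U" "x \<notin> ?C" for s x
  proof (rule double_le_if_not_mem_cube[OF that(2)])
    have "2 * s \<le> 4 * t"
      using that(1) by simp
    also have "\<dots> \<le> (2 * t + 1)\<^sup>2"
      by (simp add: power2_eq_square algebra_simps)
    finally show "2 * s \<le> (2 * t + 1)\<^sup>2" .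
  qed (use assms(3) in simp)
  have "t \<in> ?U"
    using assms(3) by simp
  have "integral ?C (\<lambda>x. w x * bump m s x) = bump_average m w s" if "s \<in> ?U" for s
    unfolding bump_average_def
    using outside[OF that] assms(2)
    by (intro integral_UNIV_eq_cube[symmetric] continuous_on_mult w continuous_on_bump) (simp add: bump_eq_0)
  moreover have "integral ?C (\<lambda>x. w x * bump_dt m t x) = integral UNIV (\<lambda>x. w x * bump_dt m t x)"
    using outside[OF \<open>t \<in> ?U\<close>] assms(2)
    by (intro integral_UNIV_eq_cube[symmetric] continuous_on_mult w continuous_on_bump_dt)
       (simp add: bump_dt_eq_0)
  ultimately show ?thesis
    using has_real_derivative_integral_cube_bump[OF w assms(2) _ \<open>t \<in> ?U\<close>, of "2 * t + 1"] assms(3)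
          has_field_derivative_transform_within_open[OF _ open_greaterThanLessThan \<open>t \<in> ?U\<close>]
    by simp
qed

lemma has_real_derivative_bump_average:
  assumes "Ck 2 v" "2 \<le> m" "0 < t"
  shows "(bump_average m v has_real_derivative bump_average (Suc m) (laplacian v) t / (4 * (real m + 1))) (at t)"
proof -
  have "integral UNIV (\<lambda>x. v x * bump_dt m t x)
      = integral UNIV (\<lambda>x. v x * (\<Sum>i\<in>UNIV. bump_second_partial (Suc m) t i x)) / (4 * (real m + 1))"
  proof -
    have "(\<lambda>x. v x * (\<Sum>i\<in>UNIV. bump_second_partial (Suc m) t i x))
        = (\<lambda>x. (4 * (real m + 1)) *\<^sub>R (v x * bump_dt m t x))"
      using sum_bump_second_partial[OF assms(2)] assms(3) by (simp add: fun_eq_iff)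
    then show ?thesis
      by simp
  qed
  also have "\<dots> = bump_average (Suc m) (laplacian v) t / (4 * (real m + 1))"
    unfolding bump_average_def using assms by (simp add: integral_laplacian_mult_bump)
  finally show ?thesis
    using has_real_derivative_bump_average_dt[OF Ck_imp_continuous_on[OF assms(1)] assms(2,3)] by simp
qed

lemma bump_average_nonneg:
  assumes "continuous_on UNIV w" "\<And>x. 0 \<le> w x" "1 \<le> m" "0 < t"
  shows "0 \<le> bump_average m w t"
  unfolding bump_average_def
proof (rule integral_nonneg)
  show "(\<lambda>x. w x * bump m t x) integrable_on UNIV"
  proof (rule integrable_on_UNIV_if_vanishes_outside_cube)
    show "continuous_on UNIV (\<lambda>x. w x * bump m t x)"
      by (intro continuous_on_mult assms(1) continuous_on_bump)
    show "w x * bump m t x = 0" if "x \<notin> cube (t + 1)" for x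
      using double_le_if_not_mem_cube[OF that] double_le_square_Suc assms(3,4) bump_eq_0 by simp
  qed
qed (simp add: assms(2,4) bump_nonneg)

lemma inverse_square_le_bump:
  assumes "1 \<le> t" "x \<bullet> x \<le> 1"
  shows "1 / t\<^sup>2 \<le> bump m t x"
proof -
  have "t ^ m \<le> (2 * t - x \<bullet> x) ^ m"
    using assms by (intro power_mono) auto
  also have "\<dots> = pos_pow m (2 * t - x \<bullet> x)"
    using assms by (simp add: pos_pow_def)
  finally have "t ^ m / t ^ (m + 2) \<le> bump m t x"
    unfolding bump_def by (rule divide_right_mono) (use assms(1) in simp)
  moreover have "t ^ m / t ^ (m + 2) = 1 / t\<^sup>2"
    using assms(1) by (simp add: power_add power2_eq_square)
  ultimately show ?thesis
    by simp
qed

lemma bump_average_lower_bound: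
  fixes w :: "real^4 \<Rightarrow> real"
  assumes w: "continuous_on UNIV w" "\<And>x. 0 < w x" and "1 \<le> m"
  shows "\<exists>c>0. \<forall>t\<ge>1. c / t\<^sup>2 \<le> bump_average m w t"
proof -
  define B :: "(real^4) set" where "B = cube (1 / 2)"
  have "compact B" "B \<noteq> {}" "continuous_on B w"
    using mem_cube[of 0 "1 / 2"] continuous_on_subset[OF w(1)] by (auto simp: B_def cube_def)
  then obtain x0 where x0: "\<And>y. y \<in> B \<Longrightarrow> w x0 \<le> w y"
    using continuous_attains_inf by metis
  have "0 < w x0"
    by (rule w(2))
  moreover have "w x0 / t\<^sup>2 \<le> bump_average m w t" if "1 \<le> t" for t
  proof -
    define f where "f x = w x * bump m t x" for x
    have cf: "continuous_on UNIV f"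
      unfolding f_def by (intro continuous_on_mult w(1) continuous_on_bump)
    have f0: "f x = 0" if "x \<notin> cube (t + 1)" for x
      using double_le_if_not_mem_cube[OF that] double_le_square_Suc \<open>1 \<le> t\<close> \<open>1 \<le> m\<close>
      by (simp add: f_def bump_eq_0)
    have "B \<subseteq> cube (t + 1)"
      unfolding B_def using \<open>1 \<le> t\<close> by (intro cube_mono) simp
    have low: "w x0 / t\<^sup>2 \<le> f x" if "x \<in> B" for x
    proof -
      have "x \<bullet> x \<le> 1"
        using inner_le_if_mem_cube[of x "1 / 2"] that by (simp add: B_def power2_eq_square)
      then have "w x0 * (1 / t\<^sup>2) \<le> w x * bump m t x"
        using x0[OF that] inverse_square_le_bump[OF \<open>1 \<le> t\<close>] \<open>0 < w x0\<close>
        by (intro mult_mono) auto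
      then show ?thesis
        by (simp add: f_def)
    qed
    have int: "f integrable_on cube r" for r
      using has_integral_integral_cube[OF cf] by (rule has_integral_integrable)
    have "w x0 / t\<^sup>2 = integral B (\<lambda>x. w x0 / t\<^sup>2)"
      using measure_cube[of "1 / 2", where 'n = 4] by (simp add: B_def cube_def)
    also have "\<dots> \<le> integral B f"
      by (rule integral_le[OF _ int[of "1 / 2", folded B_def] low]) (simp add: B_def cube_def integrable_const)
    also have "\<dots> \<le> integral (cube (t + 1)) f"
    proof (rule integral_subset_le[OF \<open>B \<subseteq> cube (t + 1)\<close> int[of "1 / 2", folded B_def] int])
      show "\<forall>x\<in>cube (t + 1). 0 \<le> f x"
        using w(2) bump_nonneg \<open>1 \<le> t\<close> by (simp add: f_def less_imp_le)
    qed
    also have "\<dots> = bump_average m w t"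
      using integral_UNIV_eq_cube[OF cf f0] unfolding bump_average_def f_def[symmetric] by simp
    finally show ?thesis .
  qed
  ultimately show ?thesis
    by blast
qed

lemma little_o_imp_abs_le_eps_plus_const:
  fixes u :: "'a::euclidean_space \<Rightarrow> real"
  assumes "continuous_on UNIV u" "u \<in> o[at_infinity](\<lambda>x. norm x ^ k)" "0 < e"
  shows "\<exists>M. \<forall>x. \<bar>u x\<bar> \<le> e * norm x ^ k + M"
proof -
  obtain b where b: "\<And>x. b \<le> norm x \<Longrightarrow> \<bar>u x\<bar> \<le> e * norm x ^ k"
    using landau_o.smallD[OF assms(2,3)] unfolding eventually_at_infinity by auto
  have "compact (u ` cball 0 b)"
    by (intro compact_continuous_image continuous_on_subset[OF assms(1)]) auto
  then obtain M where M: "\<And>x. x \<in> cball 0 b \<Longrightarrow> \<bar>u x\<bar> \<le> M"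
    using compact_imp_bounded bounded_iff by (metis image_eqI real_norm_def)
  have "\<bar>u x\<bar> \<le> e * norm x ^ k + \<bar>M\<bar>" for x
  proof (cases "b \<le> norm x")
    case True
    then show ?thesis
      using b[OF True] by simp
  next
    case False
    then show ?thesis
      using M[of x] assms(3) by (simp add: add_increasing)
  qed
  then show ?thesis
    by blast
qed

lemma bump_2_le: "0 < t \<Longrightarrow> bump 2 t x \<le> 4 / t\<^sup>2"
proof -
  assume "0 < t"
  have "pos_pow 2 (2 * t - x \<bullet> x) \<le> (2 * t)\<^sup>2"
    unfolding pos_pow_def using \<open>0 < t\<close> by (intro power_mono) auto
  then have "bump 2 t x \<le> (2 * t)\<^sup>2 / t ^ (2 + 2)"
    unfolding bump_def by (rule divide_right_mono) simp
  also have "\<dots> = 4 / t\<^sup>2"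
    using \<open>0 < t\<close> by (simp add: power2_eq_square field_simps eval_nat_numeral)
  finally show ?thesis .
qed

lemma abs_mult_bump_2_le:
  fixes u :: "real^4 \<Rightarrow> real"
  assumes u: "\<And>x. \<bar>u x\<bar> \<le> e * norm x ^ 4 + M" and "0 \<le> e" "0 < t"
  shows "\<bar>u x * bump 2 t x\<bar> \<le> (e * (2 * t)\<^sup>2 + M) * (4 / t\<^sup>2)"
proof (cases "2 * t \<le> x \<bullet> x")
  case True
  then show ?thesis
    using u[of 0] \<open>0 \<le> e\<close> by (simp add: bump_eq_0)
next
  case False
  have "norm x ^ 4 = (x \<bullet> x)\<^sup>2"
    by (simp add: power2_norm_eq_inner[symmetric] power_mult[symmetric])
  also have "\<dots> \<le> (2 * t)\<^sup>2"
    using False by (intro power_mono) auto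
  finally have "e * norm x ^ 4 \<le> e * (2 * t)\<^sup>2"
    using \<open>0 \<le> e\<close> by (intro mult_left_mono)
  then have "\<bar>u x\<bar> \<le> e * (2 * t)\<^sup>2 + M"
    using u[of x] by linarith
  moreover have "0 \<le> bump 2 t x" "bump 2 t x \<le> 4 / t\<^sup>2"
    using \<open>0 < t\<close> bump_nonneg bump_2_le by simp_all
  ultimately show ?thesis
    unfolding abs_mult by (intro mult_mono) auto
qed

lemma bump_average_2_le:
  fixes u :: "real^4 \<Rightarrow> real"
  assumes u: "continuous_on UNIV u" "u \<in> o[at_infinity](\<lambda>x. norm x ^ 4)" and "0 < \<epsilon>"
  shows "\<exists>M. \<forall>t\<ge>1. bump_average 2 u t \<le> \<epsilon> * t\<^sup>2 + M"
proof -
  \<comment> \<open>On the support of the kernel |x|^4 \<le> 4t^2, the kernel is at most 4 / t^2, and the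
    support lies in a cube of volume 64 t^2; hence the factor 1024.\<close>
  obtain M where M: "\<And>x. \<bar>u x\<bar> \<le> \<epsilon> / 1024 * norm x ^ 4 + M"
    using little_o_imp_abs_le_eps_plus_const[OF u, of "\<epsilon> / 1024"] \<open>0 < \<epsilon>\<close> by auto
  have "bump_average 2 u t \<le> \<epsilon> * t\<^sup>2 + 256 * M" if "1 \<le> t" for t
  proof -
    define r where "r = sqrt (2 * t)"
    have r: "0 \<le> r" "r\<^sup>2 = 2 * t"
      using that by (simp_all add: r_def)
    have vanish: "u x * bump 2 t x = 0" if "x \<notin> cube r" for x
      using double_le_if_not_mem_cube[OF that r(1)] r(2) by (simp add: bump_eq_0)
    have bound: "\<bar>u x * bump 2 t x\<bar> \<le> (\<epsilon> / 1024 * (2 * t)\<^sup>2 + M) * (4 / t\<^sup>2)" for x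
      using abs_mult_bump_2_le[OF M] \<open>0 < \<epsilon>\<close> that by simp
    have "\<bar>bump_average 2 u t\<bar> \<le> (\<epsilon> / 1024 * (2 * t)\<^sup>2 + M) * (4 / t\<^sup>2) * (2 * r) ^ 4"
      using abs_integral_le_if_vanishes_outside_cube[OF continuous_on_mult[OF u(1) continuous_on_bump]
                                                       vanish bound r(1)]
      by (simp add: bump_average_def)
    also have "(2 * r) ^ 4 = 16 * (r\<^sup>2)\<^sup>2"
      by (simp add: power_mult_distrib power_mult[symmetric])
    also have "\<dots> = 64 * t\<^sup>2"
      using r(2) by (simp add: power2_eq_square)
    also have "(\<epsilon> / 1024 * (2 * t)\<^sup>2 + M) * (4 / t\<^sup>2) * (64 * t\<^sup>2) = \<epsilon> * t\<^sup>2 + 256 * M"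
      using that by (simp add: power2_eq_square field_simps)
    finally show ?thesis
      by simp
  qed
  then show ?thesis
    by blast
qed

section \<open>A third-order differential inequality\<close>

lemma second_order_taylor_lower_bound:
  fixes A B C :: "real \<Rightarrow> real"
  assumes dA: "\<And>x. t0 \<le> x \<Longrightarrow> (A has_real_derivative B x) (at x)"
    and dB: "\<And>x. t0 \<le> x \<Longrightarrow> (B has_real_derivative C x) (at x)"
    and C: "\<And>x. t0 \<le> x \<Longrightarrow> b \<le> C x" and "t0 \<le> s"
  shows "A t0 + B t0 * (s - t0) + b / 2 * (s - t0)\<^sup>2 \<le> A s"
proof -
  have B: "B t0 + b * (x - t0) \<le> B x" if "t0 \<le> x" for x
  proof -
    have "B t0 - b * (t0 - t0) \<le> B x - b * (x - t0)"
    proof (rule DERIV_nonneg_imp_nondecreasing[OF that])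
      fix y
      assume "t0 \<le> y"
      then show "\<exists>d. ((\<lambda>x. B x - b * (x - t0)) has_real_derivative d) (at y) \<and> 0 \<le> d"
        using C by (auto intro!: derivative_eq_intros dB exI)
    qed
    then show ?thesis
      by simp
  qed
  have "A t0 - B t0 * (t0 - t0) - b / 2 * (t0 - t0)\<^sup>2 \<le> A s - B t0 * (s - t0) - b / 2 * (s - t0)\<^sup>2"
  proof (rule DERIV_nonneg_imp_nondecreasing[OF \<open>t0 \<le> s\<close>])
    fix y
    assume "t0 \<le> y"
    then show "\<exists>d. ((\<lambda>x. A x - B t0 * (x - t0) - b / 2 * (x - t0)\<^sup>2) has_real_derivative d) (at y) \<and> 0 \<le> d"
      using B[of y] by (auto intro!: derivative_eq_intros dA exI simp: field_simps)
  qed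
  then show ?thesis
    by simp
qed

lemma second_derivative_nonpos_if_subquadratic:
  fixes A B C :: "real \<Rightarrow> real"
  assumes dA: "\<And>x. 1 \<le> x \<Longrightarrow> (A has_real_derivative B x) (at x)"
    and dB: "\<And>x. 1 \<le> x \<Longrightarrow> (B has_real_derivative C x) (at x)"
    and C_mono: "\<And>x y. 1 \<le> x \<Longrightarrow> x \<le> y \<Longrightarrow> C x \<le> C y"
    and A_subquadratic: "\<And>\<epsilon>. 0 < \<epsilon> \<Longrightarrow> \<exists>M. \<forall>t\<ge>1. A t \<le> \<epsilon> * t\<^sup>2 + M"
    and "1 \<le> t0"
  shows "C t0 \<le> 0"
proof (rule ccontr)
  define b where "b = C t0"
  assume "\<not> C t0 \<le> 0"
  then have "0 < b"
    by (simp add: b_def)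
  obtain M where M: "\<And>t. 1 \<le> t \<Longrightarrow> A t \<le> b / 4 * t\<^sup>2 + M"
    using A_subquadratic[of "b / 4"] \<open>0 < b\<close> by auto
  have taylor: "A t0 + B t0 * (s - t0) + b / 2 * (s - t0)\<^sup>2 \<le> A s" if "t0 \<le> s" for s
    using \<open>1 \<le> t0\<close> that
    by (intro second_order_taylor_lower_bound[where C = C]) (auto intro: dA dB C_mono simp: b_def)
  define g where "g s = A t0 + B t0 * (s - t0) + b / 2 * (s - t0)\<^sup>2 - (b / 4 * s\<^sup>2 + M)" for s
  have "g s \<le> 0" if "t0 \<le> s" for s
    using taylor[OF that] M[OF order_trans[OF \<open>1 \<le> t0\<close> that]] by (simp add: g_def)
  then have "\<forall>\<^sub>F s in at_top. g s \<le> 0"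
    by (intro eventually_at_top_linorderI)
  moreover have "filterlim g at_top at_top"
    unfolding g_def using \<open>0 < b\<close> by real_asymp
  then have "\<forall>\<^sub>F s in at_top. 1 \<le> g s"
    unfolding filterlim_at_top by blast
  ultimately have "\<forall>\<^sub>F s in at_top. g s \<le> 0 \<and> 1 \<le> g s"
    by (rule eventually_conj)
  then show False
    by (auto simp: eventually_at_top_linorder)
qed

lemma negative_if_deriv_le_minus_one:
  fixes A B :: "real \<Rightarrow> real"
  assumes "\<And>x. T \<le> x \<Longrightarrow> (A has_real_derivative B x) (at x)" "\<And>x. T \<le> x \<Longrightarrow> B x \<le> -1"
  shows "A (T + \<bar>A T\<bar> + 1) < 0"
proof -
  have "A (T + \<bar>A T\<bar> + 1) + (T + \<bar>A T\<bar> + 1) \<le> A T + T"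
  proof (rule DERIV_nonpos_imp_nonincreasing[where f = "\<lambda>x. A x + x"])
    fix x
    assume "T \<le> x"
    then show "\<exists>y. ((\<lambda>x. A x + x) has_real_derivative y) (at x) \<and> y \<le> 0"
      using assms(1)[OF \<open>T \<le> x\<close>] assms(2)[OF \<open>T \<le> x\<close>] by (auto intro!: derivative_eq_intros exI)
  qed simp
  then show ?thesis
    by simp
qed

lemma le_minus_half_inverse_if_nonpos_and_deriv_ge:
  fixes C D :: "real \<Rightarrow> real"
  assumes dC: "\<And>t. 1 \<le> t \<Longrightarrow> (C has_real_derivative D t) (at t)"
    and D: "\<And>t. 1 \<le> t \<Longrightarrow> c / t\<^sup>2 \<le> D t"
    and C_nonpos: "\<And>t. 1 \<le> t \<Longrightarrow> C t \<le> 0" and "1 \<le> t"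
  shows "C t \<le> - c / (2 * t)"
proof -
  have "C t + c / t \<le> C (2 * t) + c / (2 * t)"
  proof (rule DERIV_nonneg_imp_nondecreasing[where f = "\<lambda>s. C s + c / s"])
    fix s
    assume "t \<le> s"
    with \<open>1 \<le> t\<close> show "\<exists>d. ((\<lambda>s. C s + c / s) has_real_derivative d) (at s) \<and> 0 \<le> d"
      using D[of s] by (auto intro!: derivative_eq_intros dC exI simp: power2_eq_square)
  qed (use \<open>1 \<le> t\<close> in simp)
  moreover have "c / t = c / (2 * t) + c / (2 * t)"
    using \<open>1 \<le> t\<close> by (simp add: field_simps)
  ultimately show ?thesis
    using C_nonpos[of "2 * t"] \<open>1 \<le> t\<close> by linarith
qed

lemma eventually_le_minus_one_if_deriv_le_minus_half_inverse:
  fixes B C :: "real \<Rightarrow> real"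
  assumes dB: "\<And>t. 1 \<le> t \<Longrightarrow> (B has_real_derivative C t) (at t)"
    and C: "\<And>t. 1 \<le> t \<Longrightarrow> C t \<le> - c / (2 * t)" and "0 < c"
  shows "\<exists>T\<ge>1. \<forall>s\<ge>T. B s \<le> -1"
proof -
  have B_bound: "B s \<le> B 1 - c / 2 * ln s" if "1 \<le> s" for s
  proof -
    have "B s + c / 2 * ln s \<le> B 1 + c / 2 * ln 1"
    proof (rule DERIV_nonpos_imp_nonincreasing[OF that, where f = "\<lambda>s. B s + c / 2 * ln s"])
      fix x :: real
      assume "1 \<le> x"
      then show "\<exists>d. ((\<lambda>s. B s + c / 2 * ln s) has_real_derivative d) (at x) \<and> d \<le> 0"
        using C[of x] by (auto intro!: derivative_eq_intros dB exI)
    qed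
    then show ?thesis
      by simp
  qed
  define T where "T = exp (2 * (\<bar>B 1\<bar> + 1) / c)"
  have "1 \<le> T"
    using \<open>0 < c\<close> by (simp add: T_def)
  moreover have "B s \<le> -1" if "T \<le> s" for s
  proof -
    have "ln T \<le> ln s"
      using that \<open>1 \<le> T\<close> by simp
    then have "2 * (\<bar>B 1\<bar> + 1) / c \<le> ln s"
      by (simp add: T_def)
    then have "\<bar>B 1\<bar> + 1 \<le> c / 2 * ln s"
      using \<open>0 < c\<close> by (simp add: field_simps)
    then show ?thesis
      using B_bound[of s] that \<open>1 \<le> T\<close> by linarith
  qed
  ultimately show ?thesis
    by blast
qed

lemma not_subquadratic_if_third_derivative_ge_inverse_square:
  fixes A B C D :: "real \<Rightarrow> real"
  assumes dA: "\<And>t. 1 \<le> t \<Longrightarrow> (A has_real_derivative B t) (at t)"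
    and dB: "\<And>t. 1 \<le> t \<Longrightarrow> (B has_real_derivative C t) (at t)"
    and dC: "\<And>t. 1 \<le> t \<Longrightarrow> (C has_real_derivative D t) (at t)"
    and "0 < c" and D: "\<And>t. 1 \<le> t \<Longrightarrow> c / t\<^sup>2 \<le> D t"
    and A_nonneg: "\<And>t. 1 \<le> t \<Longrightarrow> 0 \<le> A t"
  shows "\<not> (\<forall>\<epsilon>>0. \<exists>M. \<forall>t\<ge>1. A t \<le> \<epsilon> * t\<^sup>2 + M)"
proof
  assume A_subquadratic: "\<forall>\<epsilon>>0. \<exists>M. \<forall>t\<ge>1. A t \<le> \<epsilon> * t\<^sup>2 + M"
  have C_mono: "C x \<le> C y" if "1 \<le> x" "x \<le> y" for x y
  proof (rule DERIV_nonneg_imp_nondecreasing[OF that(2)])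
    fix z
    assume "x \<le> z"
    then show "\<exists>d. (C has_real_derivative d) (at z) \<and> 0 \<le> d"
      using dC[of z] D[of z] \<open>0 < c\<close> that(1) by (auto intro!: exI order_trans[OF _ D[of z]])
  qed
  have "C t \<le> 0" if "1 \<le> t" for t
    using second_derivative_nonpos_if_subquadratic[OF dA dB C_mono _ that] A_subquadratic by blast
  then have "C t \<le> - c / (2 * t)" if "1 \<le> t" for t
    using le_minus_half_inverse_if_nonpos_and_deriv_ge[OF dC D _ that] by blast
  then obtain T where "1 \<le> T" and "\<And>s. T \<le> s \<Longrightarrow> B s \<le> -1"
    using eventually_le_minus_one_if_deriv_le_minus_half_inverse[OF dB _ \<open>0 < c\<close>] by blast
  then have "A (T + \<bar>A T\<bar> + 1) < 0"
    using dA by (intro negative_if_deriv_le_minus_one[where B = B]) auto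
  then show False
    using A_nonneg[of "T + \<bar>A T\<bar> + 1"] \<open>1 \<le> T\<close> by simp
qed

lemma Ck6_iterated_laplacians:
  assumes "Ck 6 u"
  shows "Ck 2 u" "Ck 2 (laplacian u)" "Ck 2 (laplacian (laplacian u))"
    and "continuous_on UNIV (laplacian (laplacian (laplacian u)))"
proof -
  have "Ck 4 (laplacian u)"
    using Ck_laplacian[of 4 u] assms by simp
  moreover have "Ck 2 (laplacian (laplacian u))"
    using Ck_laplacian[of 2 "laplacian u"] \<open>Ck 4 (laplacian u)\<close> by simp
  moreover have "Ck 0 (laplacian (laplacian (laplacian u)))"
    using Ck_laplacian[of 0 "laplacian (laplacian u)"] \<open>Ck 2 (laplacian (laplacian u))\<close>
    by (simp only: add_0)
  ultimately show "Ck 2 u" "Ck 2 (laplacian u)" "Ck 2 (laplacian (laplacian u))"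
    and "continuous_on UNIV (laplacian (laplacian (laplacian u)))"
    using Ck_mono[of 2 6 u] Ck_mono[of 2 4 "laplacian u"] assms Ck_imp_continuous_on by auto
qed

lemma not_little_o_if_triharmonic_positive:
  fixes u :: "real^4 \<Rightarrow> real"
  assumes "Ck 6 u" and u_pos: "\<And>x. 0 < u x"
    and w_pos: "\<And>x. 0 < laplacian (laplacian (laplacian u)) x"
  shows "u \<notin> o[at_infinity](\<lambda>x. norm x ^ 4)"
proof
  assume u_small: "u \<in> o[at_infinity](\<lambda>x. norm x ^ 4)"
  note smooth = Ck6_iterated_laplacians[OF \<open>Ck 6 u\<close>]
  have scaled: "((\<lambda>t. bump_average m v t / k) has_real_derivative
                  bump_average (Suc m) (laplacian v) t / (k * (4 * (real m + 1)))) (at t)"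
    if "Ck 2 v" "2 \<le> m" "1 \<le> t" for v m k t
    using DERIV_cdivide[OF has_real_derivative_bump_average[OF that(1,2)], of t k] that(3)
    by (simp add: mult.commute)
  obtain c where "0 < c"
    and c: "\<And>t. 1 \<le> t \<Longrightarrow> c / t\<^sup>2 \<le> bump_average 5 (laplacian (laplacian (laplacian u))) t"
    using bump_average_lower_bound[OF smooth(4) w_pos, of 5] by auto
  have "\<not> (\<forall>\<epsilon>>0. \<exists>M. \<forall>t\<ge>1. bump_average 2 u t \<le> \<epsilon> * t\<^sup>2 + M)"
  proof (rule not_subquadratic_if_third_derivative_ge_inverse_square)
    show "(bump_average 2 u has_real_derivative bump_average 3 (laplacian u) t / 12) (at t)"
      if "1 \<le> t" for t
      using scaled[OF smooth(1) _ that, of 2 1] by simp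
    show "((\<lambda>t. bump_average 3 (laplacian u) t / 12) has_real_derivative
            bump_average 4 (laplacian (laplacian u)) t / 192) (at t)" if "1 \<le> t" for t
      using scaled[OF smooth(2) _ that, of 3 12] by simp
    show "((\<lambda>t. bump_average 4 (laplacian (laplacian u)) t / 192) has_real_derivative
            bump_average 5 (laplacian (laplacian (laplacian u))) t / 3840) (at t)" if "1 \<le> t" for t
      using scaled[OF smooth(3) _ that, of 4 192] by simp
    show "c / 3840 / t\<^sup>2 \<le> bump_average 5 (laplacian (laplacian (laplacian u))) t / 3840"
      if "1 \<le> t" for t
      using c[OF that] by (simp add: divide_right_mono)
    show "0 \<le> bump_average 2 u t" if "1 \<le> t" for t
      using bump_average_nonneg[OF Ck_imp_continuous_on[OF smooth(1)]] u_pos that by (simp add: less_imp_le)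
  qed (use \<open>0 < c\<close> in simp)
  then show False
    using bump_average_2_le[OF Ck_imp_continuous_on[OF smooth(1)] u_small] by blast
qed

theorem mainTheorem6:
  fixes q :: real
  assumes "q \<ge> 2"
  shows "\<not> (\<exists>u :: real^4 \<Rightarrow> real.
            Ck 6 u \<and> (\<forall>x. u x > 0)
            \<and> (\<forall>x. laplacian (laplacian (laplacian u)) x = u x powr (- q))
            \<and> u \<in> o[at_infinity](\<lambda>x. norm x ^ 4))"
proof clarify
  fix u :: "real^4 \<Rightarrow> real"
  assume "Ck 6 u" "\<forall>x. u x > 0" "\<forall>x. laplacian (laplacian (laplacian u)) x = u x powr (- q)"
    and "u \<in> o[at_infinity](\<lambda>x. norm x ^ 4)"
  then show False
    using not_little_o_if_triharmonic_positive[of u] by (simp add: less_imp_neq[symmetric])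
qed

end
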